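(* Let $p\geq1$, let $\tau$ be Lebesgue measure on $\mathbb R$, let $\alpha(t)=t+1$, let $w:\mathbb R\to(0,\infty)$ be continuous with $w$ and $1/w$ bounded, and let $T_{\alpha,w}f:=w\cdot(f\circ\alpha)$ on $L^p(\mathbb R,\tau)$. Suppose there is $l\in\mathbb Z$ with $$\beta:=\inf\Big\{\prod_{k=1}^n(w\circ\alpha^{-k})(t):\ t\in[l,l+1],\ n\in\mathbb N\Big\}>0,$$ and let $N\in\mathbb N$ be such that $\alpha^n([l,l+1])\cap[l,l+1]=\varnothing$ for all $n\geq N$. Then the set $$\{f\in L^p(\mathbb R,\tau):\ \|T_{\alpha,w}^nf-\chi_{[l,l+1]}\|_p\geq1\ \text{for all } n\geq N\}$$ is not $\sigma$-porous in $L^p(\mathbb R,\tau)$.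
   Context: $\alpha^{n}(t)=t+n$ and $\alpha^{-k}(t)=t-k$. Porosity: Let $X$ be a metric space and $0<\lambda<1$. A set $E\subseteq X$ is $\lambda$-porous at $x\in E$ if for each $\delta>0$ there is $y\in B(x;\delta)\setminus\{x\}$ with $B(y;\lambda\, d(x,y))\cap E=\varnothing$; $E$ is $\lambda$-porous if it is $\lambda$-porous at each of its points; $E$ is $\sigma$-$\lambda$-porous if it is a countable union of $\lambda$-porous subsets of $X$. A set is called $\sigma$-porous if it is $\sigma$-$\lambda$-porous for some $\lambda\in(0,1)$; "not $\sigma$-porous" means not $\sigma$-$\lambda$-porous for any $\lambda\in(0,1)$. *)

theory Defs
  imports "HOL-Analysis.Analysis"
begin

text \<open>Porosity in a (pseudo)metric space given by a carrier X and a distance d.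
  Points at distance 0 are identified (as in the quotient L^p space), so
  "y different from x" becomes "d x y > 0".\<close>

definition lambda_porous_at ::
  "('a \<Rightarrow> 'a \<Rightarrow> real) \<Rightarrow> 'a set \<Rightarrow> real \<Rightarrow> 'a set \<Rightarrow> 'a \<Rightarrow> bool" where
  "lambda_porous_at d X lam E x \<longleftrightarrow>
     (\<forall>\<delta>>0. \<exists>y\<in>X. 0 < d x y \<and> d x y < \<delta> \<and>
        (\<forall>z\<in>X. d y z < lam * d x y \<longrightarrow> z \<notin> E))"

definition lambda_porous ::
  "('a \<Rightarrow> 'a \<Rightarrow> real) \<Rightarrow> 'a set \<Rightarrow> real \<Rightarrow> 'a set \<Rightarrow> bool" where
  "lambda_porous d X lam E \<longleftrightarrow> (\<forall>x\<in>E. lambda_porous_at d X lam E x)"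

definition sigma_lambda_porous ::
  "('a \<Rightarrow> 'a \<Rightarrow> real) \<Rightarrow> 'a set \<Rightarrow> real \<Rightarrow> 'a set \<Rightarrow> bool" where
  "sigma_lambda_porous d X lam E \<longleftrightarrow>
     (\<exists>A :: nat \<Rightarrow> 'a set. (\<forall>n. A n \<subseteq> X \<and> lambda_porous d X lam (A n)) \<and> E = (\<Union>n. A n))"

definition sigma_porous ::
  "('a \<Rightarrow> 'a \<Rightarrow> real) \<Rightarrow> 'a set \<Rightarrow> 'a set \<Rightarrow> bool" where
  "sigma_porous d X E \<longleftrightarrow> (\<exists>lam. 0 < lam \<and> lam < 1 \<and> sigma_lambda_porous d X lam E)"

definition Lp_set :: "real \<Rightarrow> (real \<Rightarrow> real) set" where
  "Lp_set p = {f. f \<in> borel_measurable lborel \<and> integrable lborel (\<lambda>x. \<bar>f x\<bar> powr p)}"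

definition Lp_dist :: "real \<Rightarrow> (real \<Rightarrow> real) \<Rightarrow> (real \<Rightarrow> real) \<Rightarrow> real" where
  "Lp_dist p f g = (\<integral>x. \<bar>f x - g x\<bar> powr p \<partial>lborel) powr (1 / p)"

definition wshift :: "(real \<Rightarrow> real) \<Rightarrow> (real \<Rightarrow> real) \<Rightarrow> (real \<Rightarrow> real)" where
  "wshift w f = (\<lambda>t. w t * f (t + 1))"

end

(*
  In a complete pseudometric space no ball is \<sigma>-porous: for porous pieces A 0, A 1, ... one
  chooses nested closed balls with geometrically shrinking radii, the (k+1)-st one missing A k;
  their centres converge to a point of the first ball that lies in no A k.

  It therefore suffices to find a ball of L^p inside the set. Let \<chi> be the indicator of
  I = [l, l+1] and K = 1 + 1/\<beta>. If \<parallel>z - K \<chi>\<parallel> < 1, then \<parallel>\<chi> z\<parallel> > K - 1 = 1/\<beta>.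
  Since (T^n z)(x) = w(x) w(x+1) ... w(x+n-1) z(x+n), where the weight is at least \<beta> once
  x + n \<in> I, and since \<chi> vanishes on I - n for n \<ge> N, we get \<parallel>T^n z - \<chi>\<parallel> \<ge> \<beta> \<parallel>\<chi> z\<parallel> > 1.
*)

theory Submission
  imports Defs
begin

section \<open>Porosity in complete pseudometric spaces\<close>

locale pseudometric =
  fixes X :: "'a set" and d :: "'a \<Rightarrow> 'a \<Rightarrow> real"
  assumes dist_self: "x \<in> X \<Longrightarrow> d x x = 0"
    and dist_nonneg: "x \<in> X \<Longrightarrow> y \<in> X \<Longrightarrow> 0 \<le> d x y"
    and dist_triangle: "x \<in> X \<Longrightarrow> y \<in> X \<Longrightarrow> z \<in> X \<Longrightarrow> d x z \<le> d x y + d y z"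
begin

lemma dist_geometric_steps_le:
  assumes c: "\<And>k. c k \<in> X" and steps: "\<And>k. d (c k) (c (Suc k)) \<le> B * (1/4)^k"
    and "k \<le> j"
  shows "d (c k) (c j) \<le> 2 * B * (1/4)^k"
proof -
  have B: "0 \<le> B" using steps[of 0] dist_nonneg[OF c c, of 0 1] by simp
  have chain: "d (c k) (c (k + m)) \<le> 2 * B * (1/4)^k - 2 * B * (1/4)^(k + m)" for m
  proof (induction m)
    case 0
    show ?case using dist_self[OF c] by simp
  next
    case (Suc m)
    have "d (c k) (c (k + Suc m)) \<le> d (c k) (c (k + m)) + d (c (k + m)) (c (Suc (k + m)))"
      using dist_triangle[OF c c c] by simp
    also have "\<dots> \<le> 2 * B * (1/4)^k - 2 * B * (1/4)^(k + m) + B * (1/4)^(k + m)"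
      using Suc steps[of "k + m"] by linarith
    also have "\<dots> \<le> 2 * B * (1/4)^k - 2 * B * (1/4)^(k + Suc m)"
      using B by simp
    finally show ?case .
  qed
  obtain m where "j = k + m" using le_Suc_ex[OF \<open>k \<le> j\<close>] by blast
  then have "d (c k) (c j) \<le> 2 * B * (1/4)^k - 2 * B * (1/4)^(k + m)" using chain by simp
  moreover have "0 \<le> 2 * B * (1/4::real)^(k + m)" using B by simp
  ultimately show ?thesis by linarith
qed

lemma nested_balls_dist_le:
  assumes c: "\<And>k. c k \<in> X" and r: "\<And>k. 0 < r k"
    and nested: "\<And>k. d (c k) (c (Suc k)) + r (Suc k) \<le> r k / 2"
  shows "d (c k) (c (k + j)) + r (k + j) \<le> r k"
proof (induction j)
  case 0
  show ?case using dist_self[OF c] by simp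
next
  case (Suc j)
  have "d (c k) (c (Suc (k + j))) \<le> d (c k) (c (k + j)) + d (c (k + j)) (c (Suc (k + j)))"
    using dist_triangle[OF c c c] .
  with Suc nested[of "k + j"] r[of "k + j"] show ?case by simp
qed

end

text \<open>Completeness is only required for sequences with geometrically shrinking steps; every
  Cauchy sequence has such a subsequence.\<close>

locale complete_pseudometric = pseudometric +
  assumes geometric_steps_converge: "(\<And>k. c k \<in> X) \<Longrightarrow> (\<And>k. d (c k) (c (Suc k)) \<le> B * (1/4)^k)
      \<Longrightarrow> \<exists>x\<in>X. (\<lambda>k. d (c k) x) \<longlonglongrightarrow> 0"
begin

lemma porous_avoids_ball:
  assumes por: "lambda_porous d X lam A" and "A \<subseteq> X" and lam: "0 < lam" "lam < 1"
    and c: "c \<in> X" and r: "0 < r"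
  shows "\<exists>c' r'. c' \<in> X \<and> 0 < r' \<and> r' \<le> r/4 \<and> d c c' + r' \<le> r/2 \<and>
    (\<forall>z\<in>X. d c' z \<le> r' \<longrightarrow> z \<notin> A)"
proof (cases "\<exists>x\<in>A. d c x < r/4")
  case True
  then obtain x where x: "x \<in> A" "d c x < r/4" by blast
  have "lambda_porous_at d X lam A x" using por x(1) unfolding lambda_porous_def by blast
  moreover have "0 < r/8" using r by simp
  ultimately obtain y where y: "y \<in> X" "0 < d x y" "d x y < r/8"
      and hole: "\<And>z. z \<in> X \<Longrightarrow> d y z < lam * d x y \<Longrightarrow> z \<notin> A"
    unfolding lambda_porous_at_def by blast
  have "x \<in> X" using x(1) \<open>A \<subseteq> X\<close> by blast
  then have cy: "d c y \<le> d c x + d x y" using dist_triangle c y(1) by blast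
  have pos: "0 < lam * d x y" and small: "lam * d x y < d x y" using lam y by simp_all
  show ?thesis
  proof (intro exI conjI ballI impI)
    show "y \<in> X" "0 < lam * d x y / 2" using y pos by simp_all
    show "lam * d x y / 2 \<le> r/4" using small y by linarith
    show "d c y + lam * d x y / 2 \<le> r/2" using cy x y small by linarith
    fix z assume "z \<in> X" "d y z \<le> lam * d x y / 2"
    with pos show "z \<notin> A" using hole by simp
  qed
next
  case False
  show ?thesis
  proof (intro exI conjI ballI impI)
    show "c \<in> X" "0 < r/8" "r/8 \<le> r/4" "d c c + r/8 \<le> r/2" using c r dist_self[OF c] by simp_all
    fix z assume "d c z \<le> r/8"
    then have "d c z < r/4" using r by linarith
    then show "z \<notin> A" using False by blast
  qed
qed

lemma nested_balls_common_point:
  assumes c: "\<And>k. c k \<in> X" and r: "\<And>k. 0 < r k"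
    and shrink: "\<And>k. r (Suc k) \<le> r k / 4"
    and nested: "\<And>k. d (c k) (c (Suc k)) + r (Suc k) \<le> r k / 2"
  shows "\<exists>x\<in>X. \<forall>k. d (c k) x \<le> r k / 2"
proof -
  have r_le: "r k \<le> r 0 * (1/4)^k" for k
  proof (induction k)
    case (Suc k)
    have "r (Suc k) \<le> r k / 4" by (rule shrink)
    also have "\<dots> \<le> r 0 * (1/4)^k / 4" using Suc by simp
    finally show ?case by simp
  qed simp
  have "d (c k) (c (Suc k)) \<le> r 0 * (1/4)^k" for k
    using nested[of k] r[of k] r[of "Suc k"] r_le[of k] by linarith
  then obtain x where x: "x \<in> X" and lim: "(\<lambda>j. d (c j) x) \<longlonglongrightarrow> 0"
    using geometric_steps_converge c by blast
  have "d (c k) x \<le> r k / 2" for k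
  proof (rule LIMSEQ_le_const)
    show "(\<lambda>j. r k / 2 + d (c j) x) \<longlonglongrightarrow> r k / 2"
      using tendsto_add[OF tendsto_const lim] by simp
    have "d (c k) x \<le> r k / 2 + d (c j) x" if kj: "Suc k \<le> j" for j
    proof -
      obtain i where j: "j = Suc k + i" using le_Suc_ex[OF kj] by blast
      have "d (c k) x \<le> d (c k) (c (Suc k)) + d (c (Suc k)) x"
        "d (c (Suc k)) x \<le> d (c (Suc k)) (c j) + d (c j) x"
        using dist_triangle[OF c c x] by blast+
      then have "d (c k) x \<le> d (c k) (c (Suc k)) + d (c (Suc k)) (c j) + d (c j) x"
        by linarith
      also have "d (c (Suc k)) (c j) \<le> r (Suc k)"
        using nested_balls_dist_le[of c r, OF c r nested, of "Suc k" i] r[of j] unfolding j by linarith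
      finally show ?thesis using nested[of k] by linarith
    qed
    then show "\<exists>N. \<forall>j\<ge>N. d (c k) x \<le> r k / 2 + d (c j) x" by blast
  qed
  with x show ?thesis by blast
qed

lemma nested_balls_avoiding_porous_sets:
  assumes A: "\<And>n. A n \<subseteq> X" and por: "\<And>n. lambda_porous d X lam (A n)"
    and lam: "0 < lam" "lam < 1" and c: "c \<in> X" and r: "0 < r"
  shows "\<exists>cc rr. cc 0 = c \<and> rr 0 = r \<and> (\<forall>k. cc k \<in> X \<and> 0 < rr k \<and> rr (Suc k) \<le> rr k / 4 \<and>
    d (cc k) (cc (Suc k)) + rr (Suc k) \<le> rr k / 2 \<and> (\<forall>z\<in>X. d (cc (Suc k)) z \<le> rr (Suc k) \<longrightarrow> z \<notin> A k))"
proof -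
  define ball where "ball k cr \<longleftrightarrow> fst cr \<in> X \<and> 0 < snd cr \<and> (k = 0 \<longrightarrow> cr = (c, r))"
    for k :: nat and cr :: "'a \<times> real"
  define next_ball where "next_ball k cr cr' \<longleftrightarrow> snd cr' \<le> snd cr / 4 \<and>
      d (fst cr) (fst cr') + snd cr' \<le> snd cr / 2 \<and>
      (\<forall>z\<in>X. d (fst cr') z \<le> snd cr' \<longrightarrow> z \<notin> A k)" for k and cr cr' :: "'a \<times> real"
  have "\<exists>cr'. ball (Suc k) cr' \<and> next_ball k cr cr'" if "ball k cr" for k cr
  proof -
    have cr: "fst cr \<in> X" "0 < snd cr" using that unfolding ball_def by simp_all
    obtain c' r' where "c' \<in> X \<and> 0 < r' \<and> r' \<le> snd cr / 4 \<and> d (fst cr) c' + r' \<le> snd cr / 2 \<and>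
        (\<forall>z\<in>X. d c' z \<le> r' \<longrightarrow> z \<notin> A k)"
      using porous_avoids_ball[OF por[of k] A[of k] lam cr] by blast
    then show ?thesis unfolding ball_def next_ball_def by (intro exI[of _ "(c', r')"]) simp
  qed
  moreover have "ball 0 (c, r)" using c r unfolding ball_def by simp
  ultimately obtain s where "\<And>k. ball k (s k) \<and> next_ball k (s k) (s (Suc k))"
    using dependent_nat_choice[of ball next_ball] by blast
  then show ?thesis unfolding ball_def next_ball_def
    by (intro exI[of _ "\<lambda>k. fst (s k)"] exI[of _ "\<lambda>k. snd (s k)"]) auto
qed

theorem not_sigma_porous_if_contains_ball:
  assumes c: "c \<in> X" and r: "0 < r" and ball: "\<And>z. z \<in> X \<Longrightarrow> d c z < r \<Longrightarrow> z \<in> E"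
  shows "\<not> sigma_porous d X E"
proof
  assume "sigma_porous d X E"
  then obtain lam where lam: "0 < lam" "lam < 1" and "sigma_lambda_porous d X lam E"
    unfolding sigma_porous_def by blast
  then have "\<exists>A :: nat \<Rightarrow> 'a set. (\<forall>n. A n \<subseteq> X \<and> lambda_porous d X lam (A n)) \<and> E = (\<Union>n. A n)"
    unfolding sigma_lambda_porous_def by simp
  then obtain A :: "nat \<Rightarrow> 'a set"
    where "(\<forall>n. A n \<subseteq> X \<and> lambda_porous d X lam (A n)) \<and> E = (\<Union>n. A n)" by (rule exE)
  then have A: "\<And>n. A n \<subseteq> X" and por: "\<And>n. lambda_porous d X lam (A n)" and E: "E = (\<Union>n. A n)"
    by simp_all
  obtain cc rr where cc0: "cc 0 = c" and rr0: "rr 0 = r" and balls: "\<forall>k. cc k \<in> X \<and> 0 < rr k \<and>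
      rr (Suc k) \<le> rr k / 4 \<and> d (cc k) (cc (Suc k)) + rr (Suc k) \<le> rr k / 2 \<and>
      (\<forall>z\<in>X. d (cc (Suc k)) z \<le> rr (Suc k) \<longrightarrow> z \<notin> A k)"
    using nested_balls_avoiding_porous_sets[of A, OF A por lam c r] by blast
  then obtain x where x: "x \<in> X" and close: "\<And>k. d (cc k) x \<le> rr k / 2"
    using nested_balls_common_point[of cc rr] by blast
  have "d c x < r" using close[of 0] r unfolding cc0 rr0 by simp
  then obtain m where "x \<in> A m" using ball[OF x] E by blast
  moreover have "d (cc (Suc m)) x \<le> rr (Suc m)"
    using close[of "Suc m"] balls[rule_format, of "Suc m"] by linarith
  ultimately show False using balls x by blast
qed

end

section \<open>$L^p$ spaces of the real line\<close>

lemma powr_le_self: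
  fixes p s :: real
  assumes "p \<ge> 1" "0 \<le> s" "s \<le> 1"
  shows "s powr p \<le> s"
proof (cases "s = 0")
  case False
  with assms have "s powr p \<le> s powr 1" by (intro powr_mono') auto
  with False assms(2) show ?thesis by simp
qed simp

lemma powr_convex_combination_le:
  fixes u v t p :: real
  assumes p: "p \<ge> 1" and "0 \<le> u" "0 \<le> v" "0 \<le> t" "t \<le> 1"
  shows "(t * u + (1 - t) * v) powr p \<le> t * u powr p + (1 - t) * v powr p"
proof -
  consider "u = 0" | "v = 0" | "0 < u" "0 < v" using assms by linarith
  then show ?thesis
  proof cases
    case 1
    then show ?thesis
      using assms powr_le_self[OF p, of "1 - t"] by (simp add: powr_mult mult_right_mono)
  next
    case 2
    then show ?thesis
      using assms powr_le_self[OF p, of t] by (simp add: powr_mult mult_right_mono)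
  next
    case 3
    then show ?thesis
      using convex_onD[OF powr_convex[OF p], of "1 - t" u v] assms by (simp add: algebra_simps)
  qed
qed

text \<open>Integrated with \<open>A\<close> and \<open>B\<close> bounding the norms of two functions, this yields
  Minkowski's inequality.\<close>

lemma abs_add_powr_le:
  fixes x y A B p :: real
  assumes p: "p \<ge> 1" and A: "0 < A" and B: "0 < B"
  shows "\<bar>x + y\<bar> powr p \<le> (A + B) powr p * (A / (A + B) * (\<bar>x\<bar> / A) powr p + B / (A + B) * (\<bar>y\<bar> / B) powr p)"
proof -
  define t where "t = A / (A + B)"
  have t: "0 \<le> t" "t \<le> 1" "1 - t = B / (A + B)" using A B by (auto simp: t_def field_simps)
  have "\<bar>x + y\<bar> \<le> (A + B) * (t * (\<bar>x\<bar> / A) + (1 - t) * (\<bar>y\<bar> / B))"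
  proof -
    have "t * (\<bar>x\<bar> / A) + (1 - t) * (\<bar>y\<bar> / B) = (\<bar>x\<bar> + \<bar>y\<bar>) / (A + B)"
      using A B unfolding t(3) by (simp add: t_def add_divide_distrib)
    then show ?thesis using A B by (simp add: abs_triangle_ineq)
  qed
  then have "\<bar>x + y\<bar> powr p \<le> (A + B) powr p * (t * (\<bar>x\<bar> / A) + (1 - t) * (\<bar>y\<bar> / B)) powr p"
    using p by (simp add: powr_mono2 flip: powr_mult)
  also have "\<dots> \<le> (A + B) powr p * (t * (\<bar>x\<bar> / A) powr p + (1 - t) * (\<bar>y\<bar> / B) powr p)"
    using A B t p by (intro mult_left_mono powr_convex_combination_le) auto
  finally show ?thesis using t by (simp add: t_def)
qed

lemma powr_le_powr_imp_le:
  fixes x y a :: real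
  assumes "0 < a" "0 \<le> y" "x powr a \<le> y powr a"
  shows "x \<le> y"
proof (rule ccontr)
  assume "\<not> x \<le> y"
  then have "y powr a < x powr a" using assms by (intro powr_less_mono2) auto
  with assms(3) show False by simp
qed

definition Lp_norm :: "real \<Rightarrow> (real \<Rightarrow> real) \<Rightarrow> real" where
  "Lp_norm p f = (\<integral>x. \<bar>f x\<bar> powr p \<partial>lborel) powr (1 / p)"

lemma Lp_norm_nonneg: "0 \<le> Lp_norm p f"
  by (simp add: Lp_norm_def)

lemma Lp_norm_powr: "p \<ge> 1 \<Longrightarrow> Lp_norm p f powr p = (\<integral>x. \<bar>f x\<bar> powr p \<partial>lborel)"
  by (simp add: Lp_norm_def powr_powr integral_nonneg_AE)

lemma Lp_dist_eq_Lp_norm: "Lp_dist p f g = Lp_norm p (\<lambda>x. f x - g x)"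
  by (simp add: Lp_dist_def Lp_norm_def)

lemma Lp_setI: "f \<in> borel_measurable lborel \<Longrightarrow> integrable lborel (\<lambda>x. \<bar>f x\<bar> powr p) \<Longrightarrow> f \<in> Lp_set p"
  by (simp add: Lp_set_def)

lemma Lp_setD:
  assumes "f \<in> Lp_set p"
  shows Lp_set_measurable: "f \<in> borel_measurable lborel"
    and Lp_set_integrable: "integrable lborel (\<lambda>x. \<bar>f x\<bar> powr p)"
  using assms by (simp_all add: Lp_set_def)

lemma Lp_dist_nonneg: "0 \<le> Lp_dist p f g"
  by (simp add: Lp_dist_def)

lemma integral_abs_add_powr_le:
  assumes p: "p \<ge> 1" and f: "f \<in> Lp_set p" and g: "g \<in> Lp_set p"
    and A: "Lp_norm p f \<le> A" "0 < A" and B: "Lp_norm p g \<le> B" "0 < B"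
  shows "integrable lborel (\<lambda>x. \<bar>f x + g x\<bar> powr p)"
    and "(\<integral>x. \<bar>f x + g x\<bar> powr p \<partial>lborel) \<le> (A + B) powr p"
proof -
  note [measurable] = Lp_set_measurable[OF f] Lp_set_measurable[OF g]
  define h where "h x = (A + B) powr p *
      (A / (A + B) * (\<bar>f x\<bar> powr p / A powr p) + B / (A + B) * (\<bar>g x\<bar> powr p / B powr p))" for x
  have h: "integrable lborel h"
    unfolding h_def using Lp_set_integrable[OF f] Lp_set_integrable[OF g] by simp
  have le_h: "\<bar>f x + g x\<bar> powr p \<le> h x" for x
    using abs_add_powr_le[OF p A(2) B(2)] by (simp add: h_def powr_divide)
  show int: "integrable lborel (\<lambda>x. \<bar>f x + g x\<bar> powr p)"
    by (rule Bochner_Integration.integrable_bound[OF h]) (auto intro!: AE_I2 order_trans[OF le_h abs_ge_self])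
  have "Lp_norm p f powr p \<le> A powr p" "Lp_norm p g powr p \<le> B powr p"
    using A B p Lp_norm_nonneg by (simp_all add: powr_mono2)
  then have "Lp_norm p f powr p / A powr p \<le> 1" "Lp_norm p g powr p / B powr p \<le> 1"
    using A B by simp_all
  then have "A / (A + B) * (Lp_norm p f powr p / A powr p) + B / (A + B) * (Lp_norm p g powr p / B powr p)
      \<le> A / (A + B) + B / (A + B)"
    using A B by (intro add_mono mult_left_le) auto
  also have "\<dots> = 1" using A B by (simp flip: add_divide_distrib)
  finally have "integral\<^sup>L lborel h \<le> (A + B) powr p"
    using Lp_set_integrable[OF f] Lp_set_integrable[OF g]
    unfolding h_def Lp_norm_powr[OF p] by (simp add: mult_left_le)
  with integral_mono[OF int h le_h]
  show "(\<integral>x. \<bar>f x + g x\<bar> powr p \<partial>lborel) \<le> (A + B) powr p" by linarith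
qed

lemma Lp_set_add:
  assumes "p \<ge> 1" "f \<in> Lp_set p" "g \<in> Lp_set p"
  shows "(\<lambda>x. f x + g x) \<in> Lp_set p"
proof (rule Lp_setI)
  show "(\<lambda>x. f x + g x) \<in> borel_measurable lborel"
    using Lp_set_measurable assms by simp
  show "integrable lborel (\<lambda>x. \<bar>f x + g x\<bar> powr p)"
    using Lp_norm_nonneg[of p f] Lp_norm_nonneg[of p g]
    by (intro integral_abs_add_powr_le(1)[OF assms, of "Lp_norm p f + 1" "Lp_norm p g + 1"]) auto
qed

lemma Lp_set_uminus: "f \<in> Lp_set p \<Longrightarrow> (\<lambda>x. - f x) \<in> Lp_set p"
  by (simp add: Lp_set_def)

lemma Lp_set_diff: "p \<ge> 1 \<Longrightarrow> f \<in> Lp_set p \<Longrightarrow> g \<in> Lp_set p \<Longrightarrow> (\<lambda>x. f x - g x) \<in> Lp_set p"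
  using Lp_set_add[of p f "\<lambda>x. - g x"] Lp_set_uminus[of g p] by simp

lemma Lp_norm_triangle:
  assumes p: "p \<ge> 1" and f: "f \<in> Lp_set p" and g: "g \<in> Lp_set p"
  shows "Lp_norm p (\<lambda>x. f x + g x) \<le> Lp_norm p f + Lp_norm p g"
proof (rule field_le_epsilon)
  fix e :: real assume e: "0 < e"
  let ?A = "Lp_norm p f + e / 2" and ?B = "Lp_norm p g + e / 2"
  have "(\<integral>x. \<bar>f x + g x\<bar> powr p \<partial>lborel) \<le> (?A + ?B) powr p"
    using e Lp_norm_nonneg by (intro integral_abs_add_powr_le(2)[OF p f g]) (auto intro: add_nonneg_pos)
  then have "Lp_norm p (\<lambda>x. f x + g x) \<le> ((?A + ?B) powr p) powr (1 / p)"
    unfolding Lp_norm_def using p by (intro powr_mono2) (auto intro: integral_nonneg_AE)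
  also have "\<dots> = Lp_norm p f + Lp_norm p g + e"
    using e p Lp_norm_nonneg[of p f] Lp_norm_nonneg[of p g] by (simp add: powr_powr)
  finally show "Lp_norm p (\<lambda>x. f x + g x) \<le> Lp_norm p f + Lp_norm p g + e" .
qed

lemma Lp_dist_sym: "Lp_dist p f g = Lp_dist p g f"
  by (simp add: Lp_dist_def abs_minus_commute)

lemma Lp_dist_powr: "p \<ge> 1 \<Longrightarrow> Lp_dist p f g powr p = (\<integral>x. \<bar>f x - g x\<bar> powr p \<partial>lborel)"
  by (simp add: Lp_dist_eq_Lp_norm Lp_norm_powr)

lemma Lp_pseudometric: "p \<ge> 1 \<Longrightarrow> pseudometric (Lp_set p) (Lp_dist p)"
proof unfold_locales
  fix f g h assume p: "p \<ge> 1" and "f \<in> Lp_set p" "g \<in> Lp_set p" "h \<in> Lp_set p"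
  then have "Lp_norm p (\<lambda>x. (f x - g x) + (g x - h x)) \<le> Lp_dist p f g + Lp_dist p g h"
    unfolding Lp_dist_eq_Lp_norm by (intro Lp_norm_triangle Lp_set_diff)
  then show "Lp_dist p f h \<le> Lp_dist p f g + Lp_dist p g h"
    by (simp add: Lp_dist_eq_Lp_norm)
qed (simp_all add: Lp_dist_def)

lemma Lp_norm_mono:
  assumes "f \<in> borel_measurable lborel" "g \<in> Lp_set p" "\<And>x. \<bar>f x\<bar> \<le> \<bar>g x\<bar>" "p \<ge> 1"
  shows "f \<in> Lp_set p" "Lp_norm p f \<le> Lp_norm p g"
proof -
  have le: "\<bar>f x\<bar> powr p \<le> \<bar>g x\<bar> powr p" for x using assms(3,4) by (intro powr_mono2) auto
  have int: "integrable lborel (\<lambda>x. \<bar>f x\<bar> powr p)"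
    by (rule Bochner_Integration.integrable_bound[OF Lp_set_integrable[OF assms(2)]])
       (use assms(1) le in \<open>auto intro!: AE_I2\<close>)
  with assms(1) show "f \<in> Lp_set p" by (rule Lp_setI)
  have "(\<integral>x. \<bar>f x\<bar> powr p \<partial>lborel) \<le> (\<integral>x. \<bar>g x\<bar> powr p \<partial>lborel)"
    by (rule integral_mono[OF int Lp_set_integrable[OF assms(2)] le])
  then show "Lp_norm p f \<le> Lp_norm p g"
    unfolding Lp_norm_def using assms(4) by (intro powr_mono2) (auto intro: integral_nonneg_AE)
qed

lemma summable_abs_if_summable_scaled_powr:
  fixes a :: "nat \<Rightarrow> real"
  assumes p: "p \<ge> 1" and "summable (\<lambda>k. 2^k * \<bar>a k\<bar> powr p)"
  shows "summable (\<lambda>k. \<bar>a k\<bar>)"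
proof -
  have "\<forall>\<^sub>F k in sequentially. 2^k * \<bar>a k\<bar> powr p < 1"
    by (intro order_tendstoD(2)[OF summable_LIMSEQ_zero] assms(2)) simp
  then have "\<forall>\<^sub>F k in sequentially. \<bar>a k\<bar> \<le> ((1/2) powr (1/p))^k"
  proof (rule eventually_mono)
    fix k assume "2^k * \<bar>a k\<bar> powr p < 1"
    then have "\<bar>a k\<bar> powr p \<le> (1/2)^k" by (simp add: field_simps)
    then have "(\<bar>a k\<bar> powr p) powr (1/p) \<le> ((1/2)^k) powr (1/p)"
      using p by (intro powr_mono2) auto
    also have "((1/2::real)^k) powr (1/p) = ((1/2) powr (1/p))^k"
      by (simp add: powr_powr flip: powr_realpow powr_power)
    finally show "\<bar>a k\<bar> \<le> ((1/2) powr (1/p))^k"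
      using p by (simp add: powr_powr)
  qed
  moreover have "(1/2::real) powr (1/p) < 1" using p powr_less_mono2[of "1/p" "1/2" 1] by simp
  ultimately show ?thesis
    by (intro summable_comparison_test_ev[OF _ summable_geometric]) auto
qed

lemma AE_summable_abs_if_integral_powr_geometric:
  fixes g :: "nat \<Rightarrow> real \<Rightarrow> real"
  assumes p: "p \<ge> 1" and [measurable]: "\<And>k. g k \<in> borel_measurable lborel"
    and int: "\<And>k. integrable lborel (\<lambda>x. \<bar>g k x\<bar> powr p)"
    and bound: "\<And>k. (\<integral>x. \<bar>g k x\<bar> powr p \<partial>lborel) \<le> C * (1/4)^k"
  shows "AE x in lborel. summable (\<lambda>k. \<bar>g k x\<bar>)"
proof -
  define F where "F x = (\<Sum>k. ennreal (2^k * \<bar>g k x\<bar> powr p))" for x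
  have "0 \<le> (\<integral>x. \<bar>g 0 x\<bar> powr p \<partial>lborel)" by (rule integral_nonneg_AE) simp
  moreover have "(\<integral>x. \<bar>g 0 x\<bar> powr p \<partial>lborel) \<le> C" using bound[of 0] by simp
  ultimately have C: "0 \<le> C" by linarith
  have "(\<integral>\<^sup>+x. F x \<partial>lborel) = (\<Sum>k. \<integral>\<^sup>+x. ennreal (2^k * \<bar>g k x\<bar> powr p) \<partial>lborel)"
    unfolding F_def by (rule nn_integral_suminf) measurable
  also have "\<dots> = (\<Sum>k. ennreal (2^k * (\<integral>x. \<bar>g k x\<bar> powr p \<partial>lborel)))"
    using int by (intro arg_cong[where f=suminf] ext, subst nn_integral_eq_integral) simp_all
  also have "\<dots> \<le> (\<Sum>k. ennreal (C * (1/2)^k))"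
  proof (intro suminf_le summableI ennreal_leI)
    fix k
    have "2^k * (\<integral>x. \<bar>g k x\<bar> powr p \<partial>lborel) \<le> 2^k * (C * (1/4)^k)"
      using bound[of k] by simp
    also have "\<dots> = C * (1/2)^k" by (simp add: power_divide field_simps flip: power_mult_distrib)
    finally show "2^k * (\<integral>x. \<bar>g k x\<bar> powr p \<partial>lborel) \<le> C * (1/2)^k" .
  qed
  also have "\<dots> < \<infinity>"
  proof -
    have "summable (\<lambda>k. C * (1/2::real)^k)" by (intro summable_mult summable_geometric) simp
    then have "(\<Sum>k. ennreal (C * (1/2)^k)) \<noteq> top" using C by (intro ennreal_suminf_neq_top) simp_all
    then show ?thesis by (simp add: less_top)
  qed
  finally have "(\<integral>\<^sup>+x. F x \<partial>lborel) \<noteq> \<infinity>" by simp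
  moreover have "F \<in> borel_measurable lborel" unfolding F_def by measurable
  ultimately have "AE x in lborel. F x \<noteq> \<infinity>" by (intro nn_integral_PInf_AE)
  then show ?thesis
  proof eventually_elim
    fix x assume "F x \<noteq> \<infinity>"
    then have "summable (\<lambda>k. 2^k * \<bar>g k x\<bar> powr p)"
      unfolding F_def by (intro summable_suminf_not_top) auto
    then show "summable (\<lambda>k. \<bar>g k x\<bar>)" by (rule summable_abs_if_summable_scaled_powr[OF p])
  qed
qed

lemma AE_convergent_if_Lp_dist_geometric:
  assumes p: "p \<ge> 1" and c: "\<And>k. c k \<in> Lp_set p"
    and steps: "\<And>k. Lp_dist p (c k) (c (Suc k)) \<le> B * (1/4)^k"
  shows "AE x in lborel. convergent (\<lambda>k. c k x)"
proof -
  define g where "g k x = c (Suc k) x - c k x" for k x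
  have g: "g k \<in> Lp_set p" for k unfolding g_def by (intro Lp_set_diff p c)
  have B: "0 \<le> B" using steps[of 0] Lp_dist_nonneg[of p "c 0" "c 1"] by simp
  have "(\<integral>x. \<bar>g k x\<bar> powr p \<partial>lborel) \<le> B powr p * (1/4)^k" for k
  proof -
    have "(\<integral>x. \<bar>g k x\<bar> powr p \<partial>lborel) = Lp_dist p (c k) (c (Suc k)) powr p"
      unfolding g_def Lp_dist_sym[of p "c k"] Lp_dist_powr[OF p] ..
    also have "\<dots> \<le> (B * (1/4)^k) powr p"
      using steps[of k] p by (intro powr_mono2 Lp_dist_nonneg) auto
    also have "\<dots> = B powr p * ((1/4)^k) powr p" by (rule powr_mult)
    also have "\<dots> \<le> B powr p * (1/4)^k"
      using p by (intro mult_left_mono powr_le_self) (auto intro: power_le_one)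
    finally show ?thesis .
  qed
  then have "AE x in lborel. summable (\<lambda>k. \<bar>g k x\<bar>)"
    by (rule AE_summable_abs_if_integral_powr_geometric[OF p Lp_set_measurable[OF g] Lp_set_integrable[OF g]])
  then show ?thesis
  proof eventually_elim
    fix x assume "summable (\<lambda>k. \<bar>g k x\<bar>)"
    then have "convergent (\<lambda>n. \<Sum>k<n. g k x)"
      by (simp add: summable_rabs_cancel flip: summable_iff_convergent)
    then show "convergent (\<lambda>k. c k x)"
      using sum_lessThan_telescope[of "\<lambda>k. c k x"]
      by (simp add: g_def convergent_diff_const_right_iff)
  qed
qed

lemma nn_integral_powr_limit_le:
  assumes p: "p \<ge> 1" and c: "\<And>j. c j \<in> Lp_set p" and g: "g \<in> Lp_set p"
    and [measurable]: "f \<in> borel_measurable lborel"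
    and lim: "AE x in lborel. (\<lambda>j. c j x) \<longlonglongrightarrow> f x"
    and bound: "\<forall>\<^sub>F j in sequentially. Lp_dist p (c j) g \<le> R"
  shows "(\<integral>\<^sup>+x. ennreal (\<bar>f x - g x\<bar> powr p) \<partial>lborel) \<le> ennreal (R powr p)"
proof -
  note [measurable] = Lp_set_measurable[OF g] Lp_set_measurable[OF c]
  define u where "u j x = ennreal (\<bar>c j x - g x\<bar> powr p)" for j x
  have "(\<integral>\<^sup>+x. ennreal (\<bar>f x - g x\<bar> powr p) \<partial>lborel) = (\<integral>\<^sup>+x. liminf (\<lambda>j. u j x) \<partial>lborel)"
  proof (rule nn_integral_cong_AE)
    show "AE x in lborel. ennreal (\<bar>f x - g x\<bar> powr p) = liminf (\<lambda>j. u j x)"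
      using lim
    proof eventually_elim
      fix x assume "(\<lambda>j. c j x) \<longlonglongrightarrow> f x"
      then have "(\<lambda>j. \<bar>c j x - g x\<bar> powr p) \<longlonglongrightarrow> \<bar>f x - g x\<bar> powr p"
        using p by (intro tendsto_powr2 tendsto_intros) auto
      then show "ennreal (\<bar>f x - g x\<bar> powr p) = liminf (\<lambda>j. u j x)"
        unfolding u_def by (intro lim_imp_Liminf[symmetric] tendsto_ennrealI) simp_all
    qed
  qed
  also have "\<dots> \<le> liminf (\<lambda>j. integral\<^sup>N lborel (u j))"
    by (rule nn_integral_liminf) (simp add: u_def)
  also have "\<dots> \<le> limsup (\<lambda>j. integral\<^sup>N lborel (u j))"
    by (rule Liminf_le_Limsup) simp
  also have "\<dots> \<le> ennreal (R powr p)"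
  proof (rule Limsup_bounded)
    show "\<forall>\<^sub>F j in sequentially. integral\<^sup>N lborel (u j) \<le> ennreal (R powr p)"
      using bound
    proof eventually_elim
      fix j assume "Lp_dist p (c j) g \<le> R"
      then have "Lp_dist p (c j) g powr p \<le> R powr p"
        using p by (intro powr_mono2 Lp_dist_nonneg) auto
      moreover have "integral\<^sup>N lborel (u j) = ennreal (Lp_dist p (c j) g powr p)"
        unfolding u_def Lp_dist_powr[OF p] using Lp_set_diff[OF p c g]
        by (intro nn_integral_eq_integral) (auto simp: Lp_setD)
      ultimately show "integral\<^sup>N lborel (u j) \<le> ennreal (R powr p)"
        by (simp add: ennreal_leI)
    qed
  qed
  finally show ?thesis .
qed

lemma Lp_dist_limit_le:
  assumes p: "p \<ge> 1" and c: "\<And>j. c j \<in> Lp_set p" and g: "g \<in> Lp_set p"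
    and f: "f \<in> borel_measurable lborel"
    and lim: "AE x in lborel. (\<lambda>j. c j x) \<longlonglongrightarrow> f x"
    and bound: "\<forall>\<^sub>F j in sequentially. Lp_dist p (c j) g \<le> R"
  shows "(\<lambda>x. f x - g x) \<in> Lp_set p" and "Lp_dist p f g \<le> R"
proof -
  note [measurable] = f Lp_set_measurable[OF g]
  note fatou = nn_integral_powr_limit_le[OF p c g f lim bound]
  have int: "integrable lborel (\<lambda>x. \<bar>f x - g x\<bar> powr p)"
  proof (rule integrableI_bounded)
    show "(\<integral>\<^sup>+x. ennreal (norm (\<bar>f x - g x\<bar> powr p)) \<partial>lborel) < \<infinity>"
      using fatou by (simp add: le_less_trans[OF _ ennreal_less_top])
  qed measurable
  then show "(\<lambda>x. f x - g x) \<in> Lp_set p" by (intro Lp_setI) simp_all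
  obtain j where "Lp_dist p (c j) g \<le> R" using bound by (auto simp: eventually_sequentially)
  with Lp_dist_nonneg have R: "0 \<le> R" by (rule order_trans)
  have "(\<integral>x. \<bar>f x - g x\<bar> powr p \<partial>lborel) \<le> R powr p"
    using fatou nn_integral_eq_integral[OF int] by (simp add: ennreal_le_iff)
  then have le: "Lp_dist p f g powr p \<le> R powr p" by (simp add: Lp_dist_powr[OF p])
  have "0 < p" using p by simp
  from powr_le_powr_imp_le[OF this R le] show "Lp_dist p f g \<le> R" .
qed

lemma Lp_complete_pseudometric:
  assumes p: "p \<ge> 1"
  shows "complete_pseudometric (Lp_set p) (Lp_dist p)"
proof (intro complete_pseudometric.intro complete_pseudometric_axioms.intro Lp_pseudometric[OF p])
  interpret pseudometric "Lp_set p" "Lp_dist p" by (rule Lp_pseudometric[OF p])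
  fix c :: "nat \<Rightarrow> real \<Rightarrow> real" and B
  assume c: "\<And>k. c k \<in> Lp_set p" and steps: "\<And>k. Lp_dist p (c k) (c (Suc k)) \<le> B * (1/4)^k"
  define f where "f x = lim (\<lambda>k. c k x)" for x
  have [measurable]: "f \<in> borel_measurable lborel"
    unfolding f_def using Lp_set_measurable[OF c] by measurable
  have lim: "AE x in lborel. (\<lambda>k. c k x) \<longlonglongrightarrow> f x"
    using AE_convergent_if_Lp_dist_geometric[OF p c steps]
    by eventually_elim (simp add: f_def convergent_LIMSEQ_iff)
  have "\<forall>\<^sub>F j in sequentially. Lp_dist p (c j) (c k) \<le> 2 * B * (1/4)^k" for k
  proof -
    have "Lp_dist p (c j) (c k) \<le> 2 * B * (1/4)^k" if "k \<le> j" for j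
      using dist_geometric_steps_le[OF c steps that] by (simp add: Lp_dist_sym)
    then show ?thesis unfolding eventually_sequentially by blast
  qed
  then have diff: "(\<lambda>x. f x - c k x) \<in> Lp_set p" and close: "Lp_dist p f (c k) \<le> 2 * B * (1/4)^k" for k
    using Lp_dist_limit_le[OF p c c _ lim] by auto
  have "(\<lambda>x. (f x - c 0 x) + c 0 x) \<in> Lp_set p" by (rule Lp_set_add[OF p diff c])
  then have "f \<in> Lp_set p" by simp
  moreover have "(\<lambda>k. Lp_dist p (c k) f) \<longlonglongrightarrow> 0"
  proof (rule Lim_null_comparison)
    show "\<forall>\<^sub>F k in sequentially. norm (Lp_dist p (c k) f) \<le> 2 * B * (1/4)^k"
      using close by (simp add: Lp_dist_sym Lp_dist_nonneg)
    show "(\<lambda>k. 2 * B * (1/4::real)^k) \<longlonglongrightarrow> 0"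
      by (intro tendsto_mult_right_zero LIMSEQ_power_zero) simp
  qed
  ultimately show "\<exists>x\<in>Lp_set p. (\<lambda>k. Lp_dist p (c k) x) \<longlonglongrightarrow> 0" by blast
qed

section \<open>Weighted translations\<close>

lemma lborel_integrable_translate_iff:
  fixes f :: "real \<Rightarrow> real"
  shows "integrable lborel (\<lambda>x. f (x + a)) \<longleftrightarrow> integrable lborel f"
  using lborel_integrable_real_affine_iff[of 1 f a] by (simp add: add.commute)

lemma lborel_integral_translate:
  fixes f :: "real \<Rightarrow> real"
  shows "(\<integral>x. f (x + a) \<partial>lborel) = (\<integral>x. f x \<partial>lborel)"
  using lborel_integral_real_affine[of 1 f a] by (simp add: add.commute)

lemma Lp_set_indicator_mult:
  assumes "I \<in> sets lborel" "emeasure lborel I = 1" "0 \<le> K" "p \<ge> 1"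
  shows "(\<lambda>s. K * indicator I s) \<in> Lp_set p" and "Lp_norm p (\<lambda>s. K * indicator I s) = K"
proof -
  have pow: "\<bar>K * indicator I s\<bar> powr p = K powr p * indicator I s" for s :: real
    using assms by (auto split: split_indicator)
  have "integrable lborel (indicator I :: real \<Rightarrow> real)"
    using assms by (simp add: integrable_indicator_iff)
  then show "(\<lambda>s. K * indicator I s) \<in> Lp_set p"
    using assms(1) by (intro Lp_setI) (simp_all add: pow)
  have "measure lborel I = 1" using assms by (simp add: measure_def)
  then show "Lp_norm p (\<lambda>s. K * indicator I s) = K"
    using assms unfolding Lp_norm_def pow by (simp add: powr_powr)
qed

lemma Lp_norm_restrict_gt:
  assumes p: "p \<ge> 1" and I: "I \<in> sets lborel" "emeasure lborel I = 1" and K: "0 \<le> K"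
    and z: "z \<in> Lp_set p" and close: "Lp_dist p (\<lambda>s. K * indicator I s) z < r"
  shows "K - r < Lp_norm p (\<lambda>s. indicator I s * z s)"
proof -
  let ?h = "\<lambda>s. K * indicator I s" and ?zI = "\<lambda>s. indicator I s * z s"
  note [measurable] = Lp_set_measurable[OF z] I(1)
  have h: "?h \<in> Lp_set p" and Nh: "Lp_norm p ?h = K" by (rule Lp_set_indicator_mult[OF I K p])+
  have zI: "?zI \<in> Lp_set p" by (rule Lp_norm_mono[OF _ z _ p]) (auto split: split_indicator)
  have "Lp_norm p (\<lambda>s. ?h s - ?zI s) \<le> Lp_dist p ?h z"
    unfolding Lp_dist_eq_Lp_norm using Lp_set_diff[OF p h z]
    by (intro Lp_norm_mono(2)[OF _ _ _ p]) (auto split: split_indicator)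
  moreover have "Lp_norm p ?h \<le> Lp_norm p (\<lambda>s. ?h s - ?zI s) + Lp_norm p ?zI"
    using Lp_norm_triangle[OF p Lp_set_diff[OF p h zI] zI] by simp
  ultimately show ?thesis using close Nh by linarith
qed

lemma wshift_power: "(wshift w ^^ n) f = (\<lambda>t. (\<Prod>k<n. w (t + real k)) * f (t + real n))"
proof (induction n)
  case (Suc n)
  have "(wshift w ^^ Suc n) f = wshift w ((wshift w ^^ n) f)" by simp
  also have "\<dots> = (\<lambda>t. w t * ((\<Prod>k<n. w (t + 1 + real k)) * f (t + 1 + real n)))"
    unfolding Suc wshift_def ..
  also have "\<dots> = (\<lambda>t. (\<Prod>k<Suc n. w (t + real k)) * f (t + real (Suc n)))"
    by (subst prod.lessThan_Suc_shift) (simp add: algebra_simps)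
  finally show ?case .
qed simp

lemma prod_lessThan_reverse_shift:
  "(\<Prod>k<n. f (s - real n + real k)) = (\<Prod>k=1..n. f (s - real k))"
proof -
  have "(\<Prod>k<n. f (s - real n + real k)) = (\<Prod>i<n. f (s - real n + real (n - Suc i)))"
    by (rule prod.nat_diff_reindex[symmetric])
  also have "\<dots> = (\<Prod>i<n. f (s - real (Suc i)))"
    by (intro prod.cong refl arg_cong[where f=f]) (auto simp: of_nat_diff)
  also have "\<dots> = (\<Prod>k\<in>Suc ` {..<n}. f (s - real k))"
    by (subst prod.reindex) auto
  finally show ?thesis by (simp add: image_Suc_lessThan)
qed

lemma wshift_power_Lp_set:
  assumes p: "p \<ge> 1" and [measurable]: "w \<in> borel_measurable borel" and M: "\<And>t. \<bar>w t\<bar> \<le> M"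
    and z: "z \<in> Lp_set p"
  shows "(wshift w ^^ n) z \<in> Lp_set p"
proof -
  note [measurable] = Lp_set_measurable[OF z]
  have "(\<lambda>t. M ^ n * z (t + real n)) \<in> Lp_set p"
  proof (rule Lp_setI)
    have "integrable lborel (\<lambda>t. \<bar>M ^ n\<bar> powr p * \<bar>z (t + real n)\<bar> powr p)"
      using Lp_set_integrable[OF z] by (simp add: lborel_integrable_translate_iff[where f="\<lambda>t. \<bar>z t\<bar> powr p"])
    then show "integrable lborel (\<lambda>t. \<bar>M ^ n * z (t + real n)\<bar> powr p)"
      by (simp add: abs_mult powr_mult)
  qed simp
  moreover have "\<bar>\<Prod>k<n. w (t + real k)\<bar> \<le> M ^ n" for t
    unfolding abs_prod using M by (metis (no_types) prod_mono abs_ge_zero card_lessThan prod_constant)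
  then have "\<bar>(\<Prod>k<n. w (t + real k)) * z (t + real n)\<bar> \<le> \<bar>M ^ n * z (t + real n)\<bar>" for t
    using M[of 0] by (simp add: abs_mult mult_right_mono)
  ultimately show ?thesis unfolding wshift_power by (rule Lp_norm_mono(1)[rotated, OF _ _ p]) simp
qed

lemma wshift_power_dist_ge:
  assumes p: "p \<ge> 1" and [measurable]: "w \<in> borel_measurable borel" and M: "\<And>t. \<bar>w t\<bar> \<le> M"
    and z: "z \<in> Lp_set p" and g: "g \<in> Lp_set p" and I[measurable]: "I \<in> sets lborel"
    and \<beta>: "0 \<le> \<beta>" "\<And>s. s \<in> I \<Longrightarrow> \<beta> \<le> (\<Prod>k=1..n. w (s - real k))"
    and vanish: "\<And>x. x + real n \<in> I \<Longrightarrow> g x = 0"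
  shows "\<beta> * Lp_norm p (\<lambda>s. indicator I s * z s) \<le> Lp_dist p ((wshift w ^^ n) z) g"
proof -
  note [measurable] = Lp_set_measurable[OF z]
  define zI where "zI = (\<lambda>s. indicator I s * z s)"
  define G where "G x = \<beta> powr p * \<bar>zI (x + real n)\<bar> powr p" for x
  have "zI \<in> Lp_set p"
    unfolding zI_def by (rule Lp_norm_mono(1)[OF _ z _ p]) (auto split: split_indicator)
  then have G: "integrable lborel G"
    unfolding G_def using Lp_set_integrable
    by (simp add: lborel_integrable_translate_iff[where f="\<lambda>x. \<bar>zI x\<bar> powr p"])
  have "integral\<^sup>L lborel G = \<beta> powr p * Lp_norm p zI powr p"
    unfolding G_def Lp_norm_powr[OF p]
    by (simp add: lborel_integral_translate[where f="\<lambda>x. \<bar>zI x\<bar> powr p"])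
  also have "\<dots> = (\<beta> * Lp_norm p zI) powr p" using \<beta> Lp_norm_nonneg by (simp add: powr_mult)
  finally have IG: "integral\<^sup>L lborel G = (\<beta> * Lp_norm p zI) powr p" .
  have G_le: "G x \<le> \<bar>(wshift w ^^ n) z x - g x\<bar> powr p" for x
  proof (cases "x + real n \<in> I")
    case True
    have "\<beta> \<le> (\<Prod>k<n. w (x + real k))"
      using \<beta>(2)[OF True] prod_lessThan_reverse_shift[of w "x + real n" n] by simp
    then have "\<beta> powr p \<le> \<bar>\<Prod>k<n. w (x + real k)\<bar> powr p" using \<beta> p by (intro powr_mono2) auto
    then show ?thesis
      using True vanish[OF True] by (simp add: G_def zI_def wshift_power abs_mult powr_mult mult_right_mono)
  qed (simp add: G_def zI_def)
  have le: "(\<beta> * Lp_norm p zI) powr p \<le> Lp_dist p ((wshift w ^^ n) z) g powr p"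
    unfolding Lp_dist_powr[OF p] IG[symmetric]
    using Lp_set_diff[OF p wshift_power_Lp_set[OF p _ M z] g]
    by (intro integral_mono[OF G _ G_le]) (simp_all add: Lp_setD)
  have "0 < p" using p by simp
  from powr_le_powr_imp_le[OF this Lp_dist_nonneg le] show ?thesis by (simp add: zI_def)
qed

lemma Inf_backward_products_le:
  fixes w :: "real \<Rightarrow> real"
  assumes "\<And>t. 0 < w t" "s \<in> I" "1 \<le> n"
  shows "Inf {\<Prod>k = 1..n. w (t - real k) | t n. t \<in> I \<and> n \<ge> 1} \<le> (\<Prod>k = 1..n. w (s - real k))"
proof -
  have "\<forall>x \<in> {\<Prod>k = 1..n. w (t - real k) | t n. t \<in> I \<and> n \<ge> 1}. 0 \<le> x"
    using assms(1) by (auto intro!: prod_nonneg less_imp_le[OF assms(1)])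
  then show ?thesis using assms(2,3) by (intro cInf_lower bdd_belowI[where m=0]) blast+
qed

lemma wshift_power_far_from_indicator:
  assumes p: "p \<ge> 1" and w: "w \<in> borel_measurable borel" and M: "\<And>t. \<bar>w t\<bar> \<le> M"
    and I: "I \<in> sets lborel" "emeasure lborel I = 1"
    and \<beta>: "0 < \<beta>" "\<And>s n. s \<in> I \<Longrightarrow> 1 \<le> n \<Longrightarrow> \<beta> \<le> (\<Prod>k=1..n. w (s - real k))"
    and disjoint: "(\<lambda>t. t + real n) ` I \<inter> I = {}"
    and z: "z \<in> Lp_set p" and close: "Lp_dist p (\<lambda>s. (1 + 1 / \<beta>) * indicator I s) z < 1"
  shows "1 \<le> Lp_dist p ((wshift w ^^ n) z) (indicator I)"
proof -
  have "I \<noteq> {}" using I(2) by auto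
  with disjoint have "n \<noteq> 0" by auto
  have off: "x \<notin> I" if "x + real n \<in> I" for x
    using disjoint that by (auto simp: set_eq_iff)
  have "(1 + 1 / \<beta>) - 1 < Lp_norm p (\<lambda>s. indicator I s * z s)"
    using \<beta> by (intro Lp_norm_restrict_gt[OF p I _ z close]) simp
  then have "1 \<le> \<beta> * Lp_norm p (\<lambda>s. indicator I s * z s)" using \<beta> by (simp add: field_simps)
  also have "\<dots> \<le> Lp_dist p ((wshift w ^^ n) z) (indicator I)"
    using Lp_set_indicator_mult(1)[OF I _ p, of 1] \<beta> \<open>n \<noteq> 0\<close> off
    by (intro wshift_power_dist_ge[OF p w M z _ I(1)]) (auto split: split_indicator)
  finally show ?thesis .
qed

theorem mainTheorem16:
  fixes p :: real and w :: "real \<Rightarrow> real" and l :: int and N :: nat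
  assumes "p \<ge> 1"
    and "continuous_on UNIV w"
    and "\<And>t. w t > 0"
    and "bounded (range w)"
    and "bounded (range (\<lambda>t. 1 / w t))"
    and "Inf {\<Prod>k = 1..n. w (t - real k) | t n. t \<in> {real_of_int l..real_of_int l + 1} \<and> n \<ge> 1} > 0"
    and "\<forall>n\<ge>N. (\<lambda>t. t + real n) ` {real_of_int l..real_of_int l + 1} \<inter> {real_of_int l..real_of_int l + 1} = {}"
  shows "\<not> sigma_porous (Lp_dist p) (Lp_set p)
           {f \<in> Lp_set p. \<forall>n\<ge>N.
              Lp_dist p ((wshift w ^^ n) f) (indicator {real_of_int l..real_of_int l + 1}) \<ge> 1}"
proof -
  define I where "I = {real_of_int l..real_of_int l + 1}"
  define \<beta> where "\<beta> = Inf {\<Prod>k = 1..n. w (t - real k) | t n. t \<in> I \<and> n \<ge> 1}"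
  have p: "p \<ge> 1" and \<beta>: "0 < \<beta>" using assms(1,6) unfolding \<beta>_def I_def by simp_all
  have w: "w \<in> borel_measurable borel" by (rule borel_measurable_continuous_onI[OF assms(2)])
  obtain M where M: "\<And>t. \<bar>w t\<bar> \<le> M" using assms(4) unfolding bounded_iff by auto
  have I: "I \<in> sets lborel" "emeasure lborel I = 1" unfolding I_def by simp_all
  have \<beta>_le: "\<beta> \<le> (\<Prod>k = 1..n. w (s - real k))" if "s \<in> I" "1 \<le> n" for s n
    unfolding \<beta>_def using assms(3) that by (rule Inf_backward_products_le)
  show ?thesis unfolding I_def[symmetric]
  proof (rule complete_pseudometric.not_sigma_porous_if_contains_ball[OF Lp_complete_pseudometric[OF p]])
    show "(\<lambda>s. (1 + 1 / \<beta>) * indicator I s) \<in> Lp_set p"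
      using \<beta> by (intro Lp_set_indicator_mult(1)[OF I _ p]) simp
    fix z assume "z \<in> Lp_set p" "Lp_dist p (\<lambda>s. (1 + 1 / \<beta>) * indicator I s) z < 1"
    with assms(7) show "z \<in> {f \<in> Lp_set p. \<forall>n\<ge>N. 1 \<le> Lp_dist p ((wshift w ^^ n) f) (indicator I)}"
      using wshift_power_far_from_indicator[OF p w M I \<beta> \<beta>_le] unfolding I_def by blast
  qed simp
qed

end
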